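(* Fix $\phi\in\mathbb{R}^d$ with $\mu=\|\phi\|^2>0$, a ground-truth class $y\in[V]$ with one-hot label ${\bm y}={\bm e}_y$, softmax cross-entropy $f({\bm z},{\bm y})=-\sum_k y_k\log p_k({\bm z})$ (with $L$ a uniform bound on the norms of its first three ${\bm z}$-derivatives), $\kappa\ge0$, and ${\bm W}^t\in\mathbb{R}^{V\times d}$. Let ${\bm z}^t={\bm W}^t\phi$, ${\bm p}^t=\mathrm{softmax}({\bm z}^t)$, ${\bm g}^t={\bm p}^t-{\bm y}$, ${\bm H}^t_{{\bm z}}=\mathrm{diag}({\bm p}^t)-{\bm p}^t({\bm p}^t)^\top$, and $y^*=\arg\max_{j\neq y}p_j^t$. For step size $\eta$ with $|\eta|\in(0,1]$ take $|\rho|=\kappa\sqrt{|\eta|}$, set $\eta'=\eta\mu$ and $\tilde\rho^{\,t}=\rho\sqrt\mu/\|{\bm g}^t\|$ ($0$ if ${\bm g}^t=0$), and assume the sign condition $\eta'\tilde\rho^{\,t}>0$. With $F({\bm W})=f({\bm W}\phi,{\bm y})$, define ${\bm W}^{t+1}(\mathrm{GD})={\bm W}^t-\eta\nabla F({\bm W}^t)$ and ${\bm W}^{t+1}(\mathrm{SAM})={\bm W}^t-\eta\nabla F({\bm W}^t+\rho\nabla F({\bm W}^t)/\|\nabla F({\bm W}^t)\|)$, and $\alpha_i^{(a)}=p_i^{t+1}(a)/p_i^t$ where ${\bm p}^{t+1}(a)=\mathrm{softmax}({\bm W}^{t+1}(a)\phi)$. Then there exists $\eta_0>0$, depending only on $({\bm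 p}^t,{\bm H}^t_{{\bm z}},\|{\bm g}^t\|,\mu,\kappa,L)$, such that for all $0<|\eta|\le\eta_0$, $$\alpha^{\mathrm{SAM}}_{y^*}\le\alpha^{\mathrm{GD}}_{y^*}.$$ Moreover, the inequality is strict whenever $p^t_{y^*}\in(0,1)$ and $\tilde\rho^{\,t}\neq0$, and equality holds when $\tilde\rho^{\,t}=0$.
   Context: $\|\cdot\|$ is Euclidean/Frobenius norm; $\nabla F({\bm W})=({\bm p}({\bm W}\phi)-{\bm y})\phi^\top$. $\alpha_i$ is the one-step confidence ratio of class $i$. *)

theory Defs
  imports "HOL-Analysis.Analysis"
begin

definition softmax :: "real ^ 'v::finite \<Rightarrow> real ^ 'v" where
  "softmax z = (\<chi> i. exp (z $ i) / (\<Sum>j\<in>UNIV. exp (z $ j)))"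

definition onehot :: "'v::finite \<Rightarrow> real ^ 'v" where
  "onehot y = (\<chi> i. if i = y then 1 else 0)"

text \<open>Gradient of F(W) = f(W phi, e_y) (softmax cross-entropy):
  nabla F(W) = (softmax(W phi) - e_y) phi^T.\<close>
definition gradF :: "real ^ 'd::finite \<Rightarrow> 'v::finite \<Rightarrow> real ^ 'd ^ 'v \<Rightarrow> real ^ 'd ^ 'v" where
  "gradF \<phi> y W = (\<chi> i j. (softmax (W *v \<phi>) - onehot y) $ i * \<phi> $ j)"

definition W_GD :: "real ^ 'd::finite \<Rightarrow> 'v::finite \<Rightarrow> real \<Rightarrow> real ^ 'd ^ 'v \<Rightarrow> real ^ 'd ^ 'v" where
  "W_GD \<phi> y \<eta> W = W - \<eta> *\<^sub>R gradF \<phi> y W"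

text \<open>SAM update; norm is the Frobenius norm; division by zero gives 0
  (no perturbation when the gradient vanishes).\<close>
definition W_SAM :: "real ^ 'd::finite \<Rightarrow> 'v::finite \<Rightarrow> real \<Rightarrow> real \<Rightarrow> real ^ 'd ^ 'v \<Rightarrow> real ^ 'd ^ 'v" where
  "W_SAM \<phi> y \<eta> \<rho> W =
     W - \<eta> *\<^sub>R gradF \<phi> y (W + (\<rho> / norm (gradF \<phi> y W)) *\<^sub>R gradF \<phi> y W)"

definition conf_ratio :: "real ^ 'd::finite \<Rightarrow> real ^ 'd ^ 'v::finite \<Rightarrow> real ^ 'd ^ 'v \<Rightarrow> 'v \<Rightarrow> real" where
  "conf_ratio \<phi> W W' i = softmax (W' *v \<phi>) $ i / softmax (W *v \<phi>) $ i"

definition rho_tilde :: "real ^ 'd::finite \<Rightarrow> 'v::finite \<Rightarrow> real \<Rightarrow> real ^ 'd ^ 'v \<Rightarrow> real" where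
  "rho_tilde \<phi> y \<rho> W =
     \<rho> * sqrt ((norm \<phi>)\<^sup>2) / norm (softmax (W *v \<phi>) - onehot y)"

end

theory Submission
  imports Defs
begin

text \<open>Both updates move the logits z = W phi by -eta mu times a residual: GD by g = p - e_y,
  SAM by softmax (z + rho' g) - e_y, where rho' is the normalized radius.  After a step along h the
  reciprocal of the confidence ratio of class y* is sum_j p_j exp (eta mu (h_y* - h_j)), which equals
  1 + eta mu (h_y* - p . h) up to O(eta^2).  For the runner-up class y* the centered residual
  h_y* - p . h strictly increases along the SAM perturbation, so SAM gains a term of order
  eta mu rho' ~ eta^(3/2) over GD, and this dominates the O(eta^2) error when eta is small.\<close>

lemma softmax_pos: "0 < softmax z $ i"
  unfolding softmax_def by (simp add: sum_pos)

lemma sum_softmax: "(\<Sum>i\<in>UNIV. softmax z $ i) = 1"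
proof -
  have "0 < (\<Sum>j\<in>UNIV. exp (z $ j))" by (simp add: sum_pos)
  then show ?thesis unfolding softmax_def by (simp flip: sum_divide_distrib)
qed

definition tilt :: "real ^ 'v::finite \<Rightarrow> real ^ 'v \<Rightarrow> real ^ 'v" where
  "tilt p w = (\<chi> i. p $ i * exp (w $ i) / (\<Sum>j\<in>UNIV. p $ j * exp (w $ j)))"

lemma softmax_add: "softmax (z + w) = tilt (softmax z) w"
proof -
  define Z where "Z = (\<Sum>j\<in>UNIV. exp (z $ j))"
  have "0 < Z" unfolding Z_def by (simp add: sum_pos)
  moreover have "(\<Sum>j\<in>UNIV. softmax z $ j * exp (w $ j)) = (\<Sum>j\<in>UNIV. exp (z $ j + w $ j)) / Z"
    unfolding softmax_def Z_def by (simp add: sum_divide_distrib exp_add)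
  ultimately show ?thesis
    unfolding vec_eq_iff tilt_def softmax_def Z_def[symmetric] by (simp add: exp_add)
qed

lemma tilt_zero: "(\<Sum>j\<in>UNIV. p $ j) = 1 \<Longrightarrow> tilt p 0 = p"
  by (simp add: tilt_def vec_eq_iff)

lemma tilt_has_real_derivative_at_0:
  assumes "(\<Sum>j\<in>UNIV. p $ j) = 1"
  shows "((\<lambda>r. tilt p (r *\<^sub>R v) $ i) has_real_derivative p $ i * (v $ i - p \<bullet> v)) (at 0)"
proof -
  have "p \<bullet> v = (\<Sum>j\<in>UNIV. p $ j * v $ j)" by (simp add: inner_vec_def)
  then have "((\<lambda>r. p $ i * exp (r * v $ i) / (\<Sum>j\<in>UNIV. p $ j * exp (r * v $ j)))
      has_real_derivative p $ i * (v $ i - p \<bullet> v)) (at 0)"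
    using assms by (auto intro!: derivative_eq_intros simp: algebra_simps)
  then show ?thesis by (simp add: tilt_def)
qed

definition inv_conf_ratio :: "real ^ 'v::finite \<Rightarrow> real ^ 'v \<Rightarrow> real \<Rightarrow> 'v \<Rightarrow> real" where
  "inv_conf_ratio p h s i = (\<Sum>j\<in>UNIV. p $ j * exp (s * (h $ i - h $ j)))"

lemma inv_conf_ratio_pos: "\<forall>j. 0 < p $ j \<Longrightarrow> 0 < inv_conf_ratio p h s i"
  unfolding inv_conf_ratio_def by (simp add: sum_pos)

lemma conf_ratio_logit_step:
  assumes "W' *v \<phi> = W *v \<phi> - s *\<^sub>R h"
  shows "conf_ratio \<phi> W W' i = inverse (inv_conf_ratio (softmax (W *v \<phi>)) h s i)"
proof -
  let ?p = "softmax (W *v \<phi>)"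
  have "conf_ratio \<phi> W W' i = exp (- s * h $ i) / (\<Sum>j\<in>UNIV. ?p $ j * exp (- s * h $ j))"
    using softmax_pos[of "W *v \<phi>" i]
    unfolding conf_ratio_def assms diff_conv_add_uminus softmax_add by (simp add: tilt_def)
  also have "\<dots> = inverse ((\<Sum>j\<in>UNIV. ?p $ j * exp (- s * h $ j)) * exp (s * h $ i))"
    by (simp add: exp_minus field_simps)
  also have "(\<Sum>j\<in>UNIV. ?p $ j * exp (- s * h $ j)) * exp (s * h $ i) = inv_conf_ratio ?p h s i"
    unfolding inv_conf_ratio_def sum_distrib_right
    by (simp add: right_diff_distrib exp_diff exp_minus field_simps)
  finally show ?thesis .
qed

lemma gradF_mult_vec: "gradF \<phi> y W *v \<phi> = (norm \<phi>)\<^sup>2 *\<^sub>R (softmax (W *v \<phi>) - onehot y)"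
  by (simp add: vec_eq_iff gradF_def matrix_vector_mult_def power2_norm_eq_inner inner_vec_def
      sum_distrib_right mult_ac)

lemma norm_gradF: "norm (gradF \<phi> y W) = norm (softmax (W *v \<phi>) - onehot y) * norm \<phi>"
proof -
  let ?g = "softmax (W *v \<phi>) - onehot y"
  have row: "gradF \<phi> y W $ i = ?g $ i *\<^sub>R \<phi>" for i
    by (simp add: gradF_def vec_eq_iff)
  have "(norm (gradF \<phi> y W))\<^sup>2 = (\<Sum>i\<in>UNIV. ?g $ i * ?g $ i * (\<phi> \<bullet> \<phi>))"
    by (simp add: power2_norm_eq_inner inner_vec_def[of "gradF \<phi> y W"] row mult_ac)
  also have "\<dots> = (norm ?g * norm \<phi>)\<^sup>2"
    by (simp add: power_mult_distrib power2_norm_eq_inner inner_vec_def[of ?g] sum_distrib_right)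
  finally show ?thesis by (simp add: power2_eq_iff_nonneg)
qed

definition sam_residual :: "real ^ 'v::finite \<Rightarrow> 'v \<Rightarrow> real \<Rightarrow> real ^ 'v" where
  "sam_residual p y r = tilt p (r *\<^sub>R (p - onehot y)) - onehot y"

lemma sam_residual_zero: "(\<Sum>j\<in>UNIV. p $ j) = 1 \<Longrightarrow> sam_residual p y 0 = p - onehot y"
  by (simp add: sam_residual_def tilt_zero)

lemma W_GD_mult_vec:
  "W_GD \<phi> y \<eta> W *v \<phi> = W *v \<phi> - (\<eta> * (norm \<phi>)\<^sup>2) *\<^sub>R (softmax (W *v \<phi>) - onehot y)"
  by (simp add: W_GD_def matrix_vector_mult_diff_rdistrib gradF_mult_vec
      flip: scaleR_matrix_vector_assoc)

lemma W_SAM_mult_vec: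
  "W_SAM \<phi> y \<eta> \<rho> W *v \<phi>
     = W *v \<phi> - (\<eta> * (norm \<phi>)\<^sup>2) *\<^sub>R sam_residual (softmax (W *v \<phi>)) y (rho_tilde \<phi> y \<rho> W)"
proof -
  let ?g = "softmax (W *v \<phi>) - onehot y"
  have "\<rho> / norm (gradF \<phi> y W) * (norm \<phi>)\<^sup>2 = rho_tilde \<phi> y \<rho> W"
    by (cases "\<phi> = 0") (simp_all add: norm_gradF rho_tilde_def power2_eq_square)
  then have "(W + (\<rho> / norm (gradF \<phi> y W)) *\<^sub>R gradF \<phi> y W) *v \<phi> = W *v \<phi> + rho_tilde \<phi> y \<rho> W *\<^sub>R ?g"
    by (simp add: matrix_vector_mult_add_rdistrib gradF_mult_vec flip: scaleR_matrix_vector_assoc)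
  then show ?thesis
    by (simp add: W_SAM_def sam_residual_def matrix_vector_mult_diff_rdistrib gradF_mult_vec
        softmax_add flip: scaleR_matrix_vector_assoc)
qed

lemma conf_ratio_SAM_eq_GD:
  assumes "rho_tilde \<phi> y \<rho> W = 0"
  shows "conf_ratio \<phi> W (W_SAM \<phi> y \<eta> \<rho> W) i = conf_ratio \<phi> W (W_GD \<phi> y \<eta> W) i"
  using assms by (simp add: conf_ratio_def W_SAM_mult_vec W_GD_mult_vec sam_residual_zero sum_softmax)

lemma conf_ratio_SAM_less_GD_iff:
  fixes \<phi> :: "real ^ 'd::finite" and W :: "real ^ 'd ^ 'v::finite" and \<eta> :: real
  defines "p \<equiv> softmax (W *v \<phi>)" and "s \<equiv> \<eta> * (norm \<phi>)\<^sup>2"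
  shows "conf_ratio \<phi> W (W_SAM \<phi> y \<eta> \<rho> W) i < conf_ratio \<phi> W (W_GD \<phi> y \<eta> W) i \<longleftrightarrow>
    inv_conf_ratio p (sam_residual p y 0) s i < inv_conf_ratio p (sam_residual p y (rho_tilde \<phi> y \<rho> W)) s i"
  using softmax_pos[of "W *v \<phi>"]
  by (simp add: p_def s_def conf_ratio_logit_step[OF W_SAM_mult_vec] conf_ratio_logit_step[OF W_GD_mult_vec]
      sam_residual_zero sum_softmax inv_conf_ratio_pos inverse_less_iff_less)

lemma exp_le_one_add_square:
  fixes x :: real
  assumes "x \<le> 1"
  shows "exp x \<le> 1 + x + x\<^sup>2"
proof (cases "0 \<le> x")
  case True
  then show ?thesis using exp_bound assms by blast
next
  case False
  have "x * (x * x) \<le> 0"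
    using False by (intro mult_nonpos_nonneg) auto
  then have "1 \<le> (1 - x) * (1 + x + x\<^sup>2)"
    by (simp add: algebra_simps power2_eq_square)
  then have "inverse (1 - x) \<le> 1 + x + x\<^sup>2"
    using False by (simp add: field_simps)
  moreover have "inverse (exp (- x)) \<le> inverse (1 - x)"
    using exp_ge_add_one_self[of "- x"] False by (intro le_imp_inverse_le) auto
  ultimately show ?thesis by (simp add: exp_minus)
qed

lemma sum_weighted_one_add_diff:
  fixes p h :: "real ^ 'v::finite"
  assumes "(\<Sum>j\<in>UNIV. p $ j) = 1"
  shows "(\<Sum>j\<in>UNIV. p $ j * (1 + s * (h $ i - h $ j))) = 1 + s * (h $ i - p \<bullet> h)"
proof -
  have "(\<Sum>j\<in>UNIV. p $ j * (1 + s * (h $ i - h $ j)))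
      = (\<Sum>j\<in>UNIV. p $ j) + s * h $ i * (\<Sum>j\<in>UNIV. p $ j) - s * (p \<bullet> h)"
    by (simp add: inner_vec_def algebra_simps sum.distrib sum_subtractf sum_distrib_left)
  then show ?thesis using assms by (simp add: algebra_simps)
qed

lemma inv_conf_ratio_lower:
  fixes p h :: "real ^ 'v::finite"
  assumes "\<forall>j. 0 \<le> p $ j" and "(\<Sum>j\<in>UNIV. p $ j) = 1"
  shows "1 + s * (h $ i - p \<bullet> h) \<le> inv_conf_ratio p h s i"
proof -
  have "(\<Sum>j\<in>UNIV. p $ j * (1 + s * (h $ i - h $ j))) \<le> inv_conf_ratio p h s i"
    unfolding inv_conf_ratio_def using assms(1) by (intro sum_mono mult_left_mono) auto
  then show ?thesis using sum_weighted_one_add_diff[OF assms(2)] by simp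
qed

lemma inv_conf_ratio_upper:
  fixes p h :: "real ^ 'v::finite"
  assumes "\<forall>j. 0 \<le> p $ j" and "(\<Sum>j\<in>UNIV. p $ j) = 1"
    and "\<bar>s\<bar> \<le> 1/2" and "\<forall>j. \<bar>h $ i - h $ j\<bar> \<le> 2"
  shows "inv_conf_ratio p h s i \<le> 1 + s * (h $ i - p \<bullet> h) + 4 * s\<^sup>2"
proof -
  have "exp (s * (h $ i - h $ j)) \<le> 1 + s * (h $ i - h $ j) + 4 * s\<^sup>2" for j
  proof -
    have "\<bar>s * (h $ i - h $ j)\<bar> \<le> 1/2 * 2"
      unfolding abs_mult using assms(3,4) by (intro mult_mono) auto
    moreover have "(s * (h $ i - h $ j))\<^sup>2 \<le> s\<^sup>2 * 2\<^sup>2"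
      unfolding power_mult_distrib using assms(4)
      by (intro mult_left_mono) (use abs_le_square_iff[of "h $ i - h $ j" 2] in auto)
    ultimately show ?thesis
      using exp_le_one_add_square[of "s * (h $ i - h $ j)"] by (simp add: abs_le_iff)
  qed
  then have "inv_conf_ratio p h s i \<le> (\<Sum>j\<in>UNIV. p $ j * (1 + s * (h $ i - h $ j) + 4 * s\<^sup>2))"
    unfolding inv_conf_ratio_def using assms(1) by (intro sum_mono mult_left_mono) auto
  also have "\<dots> = (\<Sum>j\<in>UNIV. p $ j * (1 + s * (h $ i - h $ j))) + 4 * s\<^sup>2"
    unfolding distrib_left sum.distrib using assms(2) by (simp flip: sum_distrib_right)
  also have "\<dots> = 1 + s * (h $ i - p \<bullet> h) + 4 * s\<^sup>2"
    using sum_weighted_one_add_diff[OF assms(2)] by simp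
  finally show ?thesis .
qed

lemma runner_up_slope_pos:
  fixes p :: "real ^ 'v::finite"
  assumes pos: "\<forall>j. 0 < p $ j" and sum1: "(\<Sum>j\<in>UNIV. p $ j) = 1"
    and "m \<noteq> y" and max: "\<forall>j. j \<noteq> y \<longrightarrow> p $ j \<le> p $ m"
  defines "g \<equiv> p - onehot y"
  shows "0 < p $ m * (g $ m - p \<bullet> g) - (\<Sum>j\<in>UNIV. p $ j * (p $ j * (g $ j - p \<bullet> g)))"
proof -
  define q P where "q = p $ y" and "P = p $ m"
  define R A2 A3 where "R = (\<Sum>j\<in>UNIV - {y}. p $ j)"
    and "A2 = (\<Sum>j\<in>UNIV - {y}. (p $ j)\<^sup>2)" and "A3 = (\<Sum>j\<in>UNIV - {y}. (p $ j) ^ 3)"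
  have split_y: "(\<Sum>j\<in>UNIV. f j) = f y + (\<Sum>j\<in>UNIV - {y}. f j)" for f :: "'v \<Rightarrow> real"
    by (rule sum.remove) auto
  have g: "g $ j = p $ j - (if j = y then 1 else 0)" for j
    by (simp add: g_def onehot_def)
  have R: "R = 1 - q"
    using sum1 split_y[of "\<lambda>j. p $ j"] by (simp add: R_def q_def)
  have pg: "p \<bullet> g = q\<^sup>2 + A2 - q"
    using split_y[of "\<lambda>j. p $ j * g $ j"]
    by (simp add: inner_vec_def g q_def A2_def power2_eq_square algebra_simps)
  have "(\<Sum>j\<in>UNIV. p $ j * (p $ j * (g $ j - p \<bullet> g))) = q ^ 3 + A3 - q\<^sup>2 - (p \<bullet> g) * (q\<^sup>2 + A2)"
    using split_y[of "\<lambda>j. p $ j * (p $ j * (g $ j - p \<bullet> g))"]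
    by (simp add: g q_def A2_def A3_def power2_eq_square power3_eq_cube algebra_simps
        sum_subtractf sum_distrib_left)
  then have slope: "p $ m * (g $ m - p \<bullet> g) - (\<Sum>j\<in>UNIV. p $ j * (p $ j * (g $ j - p \<bullet> g)))
      = (P - A2)\<^sup>2 + (P * A2 - A3) + q * R * (P - A2) + q\<^sup>2 * R\<^sup>2 + q\<^sup>2 * A2"
    using \<open>m \<noteq> y\<close> by (simp add: g pg R P_def power2_eq_square power3_eq_cube algebra_simps)
  have "0 < q" "0 < P" "0 \<le> R"
    using pos by (auto simp: q_def P_def R_def intro: sum_nonneg less_imp_le)
  have "P\<^sup>2 \<le> A2"
    unfolding A2_def P_def using \<open>m \<noteq> y\<close> by (intro member_le_sum) auto
  have "A2 \<le> P * R" and "A3 \<le> P * A2"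
    unfolding A2_def A3_def R_def sum_distrib_left using max pos
    by (auto intro!: sum_mono mult_right_mono simp: P_def power2_eq_square power3_eq_cube less_imp_le)
  have "A2 \<le> P - P * q"
    using \<open>A2 \<le> P * R\<close> by (simp add: R right_diff_distrib)
  then have "0 \<le> P - A2"
    using mult_pos_pos[OF \<open>0 < P\<close> \<open>0 < q\<close>] by linarith
  have "0 < A2"
    using \<open>0 < P\<close> \<open>P\<^sup>2 \<le> A2\<close> by (smt (verit) zero_less_power)
  show ?thesis
    unfolding slope using \<open>0 < q\<close> \<open>0 \<le> R\<close> \<open>0 \<le> P - A2\<close> \<open>0 < A2\<close> \<open>A3 \<le> P * A2\<close>
    by (simp add: add_nonneg_pos)
qed

lemma sam_residual_centered_increasing_at_0:
  fixes p :: "real ^ 'v::finite"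
  assumes "\<forall>j. 0 < p $ j" and sum1: "(\<Sum>j\<in>UNIV. p $ j) = 1"
    and "m \<noteq> y" and "\<forall>j. j \<noteq> y \<longrightarrow> p $ j \<le> p $ m"
  shows "\<exists>c>0. ((\<lambda>r. sam_residual p y r $ m - p \<bullet> sam_residual p y r) has_real_derivative c) (at 0)"
proof -
  define g where "g = p - onehot y"
  have "(\<lambda>r. sam_residual p y r $ m - p \<bullet> sam_residual p y r)
      = (\<lambda>r. tilt p (r *\<^sub>R g) $ m - onehot y $ m
               - ((\<Sum>j\<in>UNIV. p $ j * tilt p (r *\<^sub>R g) $ j) - p \<bullet> onehot y))"
    by (simp add: sam_residual_def g_def inner_vec_def fun_eq_iff right_diff_distrib sum_subtractf)
  moreover have "((\<lambda>r. tilt p (r *\<^sub>R g) $ m - onehot y $ m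
               - ((\<Sum>j\<in>UNIV. p $ j * tilt p (r *\<^sub>R g) $ j) - p \<bullet> onehot y))
      has_real_derivative p $ m * (g $ m - p \<bullet> g) - 0
               - ((\<Sum>j\<in>UNIV. p $ j * (p $ j * (g $ j - p \<bullet> g))) - 0)) (at 0)"
    by (intro DERIV_diff DERIV_sum DERIV_cmult DERIV_const tilt_has_real_derivative_at_0 sum1)
  ultimately have "((\<lambda>r. sam_residual p y r $ m - p \<bullet> sam_residual p y r) has_real_derivative
      p $ m * (g $ m - p \<bullet> g) - (\<Sum>j\<in>UNIV. p $ j * (p $ j * (g $ j - p \<bullet> g)))) (at 0)"
    by simp
  then show ?thesis
    using runner_up_slope_pos[OF assms] unfolding g_def by blast
qed

lemma inv_conf_ratio_sam_residual_gap:
  fixes p :: "real ^ 'v::finite"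
  assumes pos: "\<forall>j. 0 < p $ j" and sum1: "(\<Sum>j\<in>UNIV. p $ j) = 1"
    and "m \<noteq> y" and "\<forall>j. j \<noteq> y \<longrightarrow> p $ j \<le> p $ m"
  shows "\<exists>c>0. \<exists>\<delta>>0. \<forall>s r. 0 < s * r \<and> \<bar>r\<bar> < \<delta> \<and> \<bar>s\<bar> \<le> 1/2 \<and> \<bar>s\<bar> \<le> c * \<bar>r\<bar> \<longrightarrow>
           inv_conf_ratio p (sam_residual p y 0) s m < inv_conf_ratio p (sam_residual p y r) s m"
proof -
  define \<psi> where "\<psi> r = sam_residual p y r $ m - p \<bullet> sam_residual p y r" for r
  obtain c where "0 < c" and "(\<psi> has_real_derivative c) (at 0)"
    using sam_residual_centered_increasing_at_0[OF assms] unfolding \<psi>_def by blast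
  then have "\<forall>\<^sub>F r in at 0. c / 2 < (\<psi> (0 + r) - \<psi> 0) / r"
    using order_tendstoD(1)[OF DERIV_D, of \<psi> c 0 "c / 2"] by simp
  then obtain \<delta> where "0 < \<delta>" and slope: "\<And>r. r \<noteq> 0 \<Longrightarrow> \<bar>r\<bar> < \<delta> \<Longrightarrow> c / 2 < (\<psi> r - \<psi> 0) / r"
    unfolding eventually_at by (auto simp: dist_real_def)
  have nonneg: "\<forall>j. 0 \<le> p $ j"
    using pos by (simp add: less_imp_le)
  have p_le_1: "p $ j \<le> 1" for j
    using member_le_sum[of j UNIV "\<lambda>j. p $ j"] nonneg sum1 by simp
  have residual_range: "\<bar>sam_residual p y 0 $ m - sam_residual p y 0 $ j\<bar> \<le> 2" for j
    using p_le_1[of j] p_le_1[of m] pos[rule_format, of j] pos[rule_format, of m]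
    by (auto simp: sam_residual_zero[OF sum1] onehot_def abs_le_iff)
  have "inv_conf_ratio p (sam_residual p y 0) s m < inv_conf_ratio p (sam_residual p y r) s m"
    if sr: "0 < s * r" "\<bar>r\<bar> < \<delta>" "\<bar>s\<bar> \<le> 1/2" "\<bar>s\<bar> \<le> c / 8 * \<bar>r\<bar>" for s r
  proof -
    have "r \<noteq> 0"
      using sr(1) by auto
    \<comment> \<open>SAM's first-order gain beats the second-order error of the GD bound\<close>
    have "4 * s\<^sup>2 = \<bar>s\<bar> * (8 * \<bar>s\<bar>) * (c / 2) / c"
      using \<open>0 < c\<close> by (simp add: power2_eq_square)
    also have "\<dots> \<le> \<bar>s\<bar> * (c * \<bar>r\<bar>) * (c / 2) / c"
      using sr \<open>0 < c\<close> by (intro divide_right_mono mult_right_mono mult_left_mono) auto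
    also have "\<dots> = s * r * (c / 2)"
      using sr \<open>0 < c\<close> by (simp add: abs_mult[symmetric])
    also have "\<dots> < s * r * ((\<psi> r - \<psi> 0) / r)"
      using sr slope \<open>r \<noteq> 0\<close> by (intro mult_strict_left_mono) auto
    also have "\<dots> = s * \<psi> r - s * \<psi> 0"
      using \<open>r \<noteq> 0\<close> by (simp add: field_simps)
    finally have "1 + s * \<psi> 0 + 4 * s\<^sup>2 < 1 + s * \<psi> r"
      by simp
    moreover have "inv_conf_ratio p (sam_residual p y 0) s m \<le> 1 + s * \<psi> 0 + 4 * s\<^sup>2"
      unfolding \<psi>_def using sr residual_range by (intro inv_conf_ratio_upper nonneg sum1) auto
    moreover have "1 + s * \<psi> r \<le> inv_conf_ratio p (sam_residual p y r) s m"
      unfolding \<psi>_def by (intro inv_conf_ratio_lower nonneg sum1)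
    ultimately show ?thesis by linarith
  qed
  moreover have "0 < c / 8"
    using \<open>0 < c\<close> by simp
  ultimately show ?thesis
    using \<open>0 < \<delta>\<close> by blast
qed

lemma inv_conf_ratio_sam_residual_gap_eventually:
  fixes p :: "real ^ 'v::finite"
  assumes "\<forall>j. 0 < p $ j" and "(\<Sum>j\<in>UNIV. p $ j) = 1"
    and "m \<noteq> y" and "\<forall>j. j \<noteq> y \<longrightarrow> p $ j \<le> p $ m"
    and "0 < \<mu>" and "0 \<le> K"
  shows "\<forall>\<^sub>F \<eta> in at 0. \<forall>r. \<bar>r\<bar> = K * sqrt \<bar>\<eta>\<bar> \<and> 0 < \<eta> * \<mu> * r \<longrightarrow>
           inv_conf_ratio p (sam_residual p y 0) (\<eta> * \<mu>) m < inv_conf_ratio p (sam_residual p y r) (\<eta> * \<mu>) m"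
proof (cases "K = 0")
  case True
  then show ?thesis by simp
next
  case False
  then have "0 < K" using \<open>0 \<le> K\<close> by simp
  obtain c \<delta> where "0 < c" "0 < \<delta>" and gap:
    "\<And>s r. 0 < s * r \<Longrightarrow> \<bar>r\<bar> < \<delta> \<Longrightarrow> \<bar>s\<bar> \<le> 1/2 \<Longrightarrow> \<bar>s\<bar> \<le> c * \<bar>r\<bar> \<Longrightarrow>
       inv_conf_ratio p (sam_residual p y 0) s m < inv_conf_ratio p (sam_residual p y r) s m"
    using inv_conf_ratio_sam_residual_gap[OF assms(1-4)] by blast
  have "((\<lambda>\<eta>. \<mu> * \<bar>\<eta>\<bar>) \<longlongrightarrow> 0) (at 0)" "((\<lambda>\<eta>. K * sqrt \<bar>\<eta>\<bar>) \<longlongrightarrow> 0) (at 0)"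
    "((\<lambda>\<eta>. \<mu> * sqrt \<bar>\<eta>\<bar>) \<longlongrightarrow> 0) (at 0)"
    by (auto intro!: tendsto_eq_intros)
  then have "\<forall>\<^sub>F \<eta> in at 0. \<mu> * \<bar>\<eta>\<bar> < 1/2 \<and> K * sqrt \<bar>\<eta>\<bar> < \<delta> \<and> \<mu> * sqrt \<bar>\<eta>\<bar> < c * K"
    using \<open>0 < c\<close> \<open>0 < \<delta>\<close> \<open>0 < K\<close> by (intro eventually_conj order_tendstoD(2)) auto
  then show ?thesis
  proof (rule eventually_mono, intro allI impI)
    fix \<eta> r
    assume small: "\<mu> * \<bar>\<eta>\<bar> < 1/2 \<and> K * sqrt \<bar>\<eta>\<bar> < \<delta> \<and> \<mu> * sqrt \<bar>\<eta>\<bar> < c * K"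
      and r: "\<bar>r\<bar> = K * sqrt \<bar>\<eta>\<bar> \<and> 0 < \<eta> * \<mu> * r"
    have "\<bar>\<eta> * \<mu>\<bar> = \<mu> * sqrt \<bar>\<eta>\<bar> * sqrt \<bar>\<eta>\<bar>"
      using \<open>0 < \<mu>\<close> by (simp add: abs_mult)
    also have "\<dots> \<le> c * K * sqrt \<bar>\<eta>\<bar>"
      using small by (intro mult_right_mono) auto
    also have "\<dots> = c * \<bar>r\<bar>"
      using r by simp
    finally show "inv_conf_ratio p (sam_residual p y 0) (\<eta> * \<mu>) m
        < inv_conf_ratio p (sam_residual p y r) (\<eta> * \<mu>) m"
      using small r \<open>0 < \<mu>\<close> by (intro gap) (auto simp: abs_mult mult_ac)
  qed
qed

lemma eventually_at_0_bound:
  "\<forall>\<^sub>F x in at (0::real). P x \<Longrightarrow> \<exists>d>0. \<forall>x. 0 < \<bar>x\<bar> \<and> \<bar>x\<bar> \<le> d \<longrightarrow> P x"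
  unfolding eventually_at_le dist_real_def by auto

lemma conf_ratio_SAM_le_GD_eventually:
  fixes p :: "real ^ 'v::finite" and y :: 'v
  assumes pos: "\<forall>j. 0 < p $ j" and sum1: "(\<Sum>j\<in>UNIV. p $ j) = 1" and "0 \<le> \<kappa>" and "0 < \<mu>"
  shows "\<forall>\<^sub>F \<eta> in at 0. \<forall>(\<phi> :: real ^ 'd::finite) W \<rho> m.
           (norm \<phi>)\<^sup>2 = \<mu> \<and> softmax (W *v \<phi>) = p \<and> \<bar>\<rho>\<bar> = \<kappa> * sqrt \<bar>\<eta>\<bar>
           \<and> 0 \<le> \<eta> * \<mu> * rho_tilde \<phi> y \<rho> W \<and> m \<noteq> y \<and> (\<forall>j. j \<noteq> y \<longrightarrow> p $ j \<le> p $ m) \<longrightarrow>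
             conf_ratio \<phi> W (W_SAM \<phi> y \<eta> \<rho> W) m \<le> conf_ratio \<phi> W (W_GD \<phi> y \<eta> W) m
           \<and> (rho_tilde \<phi> y \<rho> W \<noteq> 0 \<longrightarrow>
                conf_ratio \<phi> W (W_SAM \<phi> y \<eta> \<rho> W) m < conf_ratio \<phi> W (W_GD \<phi> y \<eta> W) m)
           \<and> (rho_tilde \<phi> y \<rho> W = 0 \<longrightarrow>
                conf_ratio \<phi> W (W_SAM \<phi> y \<eta> \<rho> W) m = conf_ratio \<phi> W (W_GD \<phi> y \<eta> W) m)"
proof -
  define K where "K = \<kappa> * sqrt \<mu> / norm (p - onehot y)"
  define runner_up where "runner_up m \<longleftrightarrow> m \<noteq> y \<and> (\<forall>j. j \<noteq> y \<longrightarrow> p $ j \<le> p $ m)" for m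
  define gap where "gap \<eta> m r \<longleftrightarrow>
    inv_conf_ratio p (sam_residual p y 0) (\<eta> * \<mu>) m < inv_conf_ratio p (sam_residual p y r) (\<eta> * \<mu>) m"
    for \<eta> m r
  have "0 \<le> K"
    using \<open>0 \<le> \<kappa>\<close> \<open>0 < \<mu>\<close> by (simp add: K_def)
  have "\<forall>\<^sub>F \<eta> in at 0. \<forall>m. runner_up m \<longrightarrow> (\<forall>r. \<bar>r\<bar> = K * sqrt \<bar>\<eta>\<bar> \<and> 0 < \<eta> * \<mu> * r \<longrightarrow> gap \<eta> m r)"
  proof (rule eventually_all_finite)
    fix m
    show "\<forall>\<^sub>F \<eta> in at 0. runner_up m \<longrightarrow> (\<forall>r. \<bar>r\<bar> = K * sqrt \<bar>\<eta>\<bar> \<and> 0 < \<eta> * \<mu> * r \<longrightarrow> gap \<eta> m r)"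
      using inv_conf_ratio_sam_residual_gap_eventually[OF pos sum1 _ _ \<open>0 < \<mu>\<close> \<open>0 \<le> K\<close>, of m y]
      unfolding gap_def by (cases "runner_up m") (auto simp: runner_up_def)
  qed
  with eventually_neq_at_within have "\<forall>\<^sub>F \<eta> in at 0. \<eta> \<noteq> 0 \<and>
      (\<forall>m. runner_up m \<longrightarrow> (\<forall>r. \<bar>r\<bar> = K * sqrt \<bar>\<eta>\<bar> \<and> 0 < \<eta> * \<mu> * r \<longrightarrow> gap \<eta> m r))"
    by (rule eventually_conj)
  then show ?thesis
  proof (rule eventually_mono, intro allI impI, elim conjE)
    fix \<eta> and \<phi> :: "real ^ 'd" and W \<rho> m
    assume "\<eta> \<noteq> 0"
      and gaps: "\<forall>m. runner_up m \<longrightarrow> (\<forall>r. \<bar>r\<bar> = K * sqrt \<bar>\<eta>\<bar> \<and> 0 < \<eta> * \<mu> * r \<longrightarrow> gap \<eta> m r)"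
      and \<phi>: "(norm \<phi>)\<^sup>2 = \<mu>" and p_eq: "softmax (W *v \<phi>) = p" and \<rho>: "\<bar>\<rho>\<bar> = \<kappa> * sqrt \<bar>\<eta>\<bar>"
      and sign: "0 \<le> \<eta> * \<mu> * rho_tilde \<phi> y \<rho> W"
      and "m \<noteq> y" and "\<forall>j. j \<noteq> y \<longrightarrow> p $ j \<le> p $ m"
    have "conf_ratio \<phi> W (W_SAM \<phi> y \<eta> \<rho> W) m < conf_ratio \<phi> W (W_GD \<phi> y \<eta> W) m"
      if "rho_tilde \<phi> y \<rho> W \<noteq> 0"
    proof -
      have "\<bar>rho_tilde \<phi> y \<rho> W\<bar> = K * sqrt \<bar>\<eta>\<bar>"
        using \<phi> p_eq \<rho> \<open>0 < \<mu>\<close> by (simp add: rho_tilde_def K_def abs_mult)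
      moreover have "0 < \<eta> * \<mu> * rho_tilde \<phi> y \<rho> W"
        using sign that \<open>\<eta> \<noteq> 0\<close> \<open>0 < \<mu>\<close> by (simp add: order.strict_iff_order)
      moreover have "runner_up m"
        unfolding runner_up_def using \<open>m \<noteq> y\<close> \<open>\<forall>j. j \<noteq> y \<longrightarrow> p $ j \<le> p $ m\<close> by blast
      ultimately have "gap \<eta> m (rho_tilde \<phi> y \<rho> W)"
        using gaps by blast
      then show ?thesis
        unfolding conf_ratio_SAM_less_GD_iff gap_def using \<phi> p_eq by simp
    qed
    then show "conf_ratio \<phi> W (W_SAM \<phi> y \<eta> \<rho> W) m \<le> conf_ratio \<phi> W (W_GD \<phi> y \<eta> W) m
           \<and> (rho_tilde \<phi> y \<rho> W \<noteq> 0 \<longrightarrow>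
                conf_ratio \<phi> W (W_SAM \<phi> y \<eta> \<rho> W) m < conf_ratio \<phi> W (W_GD \<phi> y \<eta> W) m)
           \<and> (rho_tilde \<phi> y \<rho> W = 0 \<longrightarrow>
                conf_ratio \<phi> W (W_SAM \<phi> y \<eta> \<rho> W) m = conf_ratio \<phi> W (W_GD \<phi> y \<eta> W) m)"
      using conf_ratio_SAM_eq_GD[of \<phi> y \<rho> W \<eta> m]
      by (cases "rho_tilde \<phi> y \<rho> W = 0") (simp_all add: less_imp_le)
  qed
qed

theorem corollary4:
  fixes \<kappa> \<mu> :: real and y :: "'v::finite" and p :: "real ^ 'v"
  assumes "\<kappa> \<ge> 0" and "\<mu> > 0"
  shows "\<exists>\<eta>0 > 0. \<forall>(\<phi> :: real ^ 'd::finite) (W :: real ^ 'd ^ 'v).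
           (norm \<phi>)\<^sup>2 = \<mu> \<and> softmax (W *v \<phi>) = p \<longrightarrow>
           (\<forall>\<eta> \<rho> ystar.
              0 < \<bar>\<eta>\<bar> \<and> \<bar>\<eta>\<bar> \<le> 1 \<and> \<bar>\<eta>\<bar> \<le> \<eta>0 \<and>
              \<bar>\<rho>\<bar> = \<kappa> * sqrt \<bar>\<eta>\<bar> \<and>
              (\<eta> * \<mu>) * rho_tilde \<phi> y \<rho> W \<ge> 0 \<and>
              ystar \<noteq> y \<and> (\<forall>j. j \<noteq> y \<longrightarrow> p $ j \<le> p $ ystar) \<longrightarrow>
                conf_ratio \<phi> W (W_SAM \<phi> y \<eta> \<rho> W) ystar
                  \<le> conf_ratio \<phi> W (W_GD \<phi> y \<eta> W) ystar
              \<and> (0 < p $ ystar \<and> p $ ystar < 1 \<and> rho_tilde \<phi> y \<rho> W \<noteq> 0 \<longrightarrow>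
                   conf_ratio \<phi> W (W_SAM \<phi> y \<eta> \<rho> W) ystar
                     < conf_ratio \<phi> W (W_GD \<phi> y \<eta> W) ystar)
              \<and> (rho_tilde \<phi> y \<rho> W = 0 \<longrightarrow>
                   conf_ratio \<phi> W (W_SAM \<phi> y \<eta> \<rho> W) ystar
                     = conf_ratio \<phi> W (W_GD \<phi> y \<eta> W) ystar))"
proof (cases "\<exists>z. softmax z = p")
  case False
  then show ?thesis by (intro exI[of _ 1]) auto
next
  case True
  then have "\<forall>j. 0 < p $ j" and "(\<Sum>j\<in>UNIV. p $ j) = 1"
    using softmax_pos sum_softmax by blast+
  from eventually_at_0_bound[OF conf_ratio_SAM_le_GD_eventually[OF this assms, of y, where 'd = 'd]]
  show ?thesis by blast
qed

end
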